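(* For a (nondegenerate) triangle $AB\Gamma$, let $\ell_1$ be the line perpendicular to $AB$ through $B$, $\ell_2$ the line perpendicular to $B\Gamma$ through $\Gamma$, and $\ell_3$ the line perpendicular to $\Gamma A$ through $A$, and let $A'B'\Gamma'$ be the triangle bounded by these three lines. Let $E$ and $E'$ be the areas of $AB\Gamma$ and $A'B'\Gamma'$. Then, over all such pairs in which the triangles are right triangles, the minimum value of $E'/E$ is $4$, attained exactly when the triangles are isosceles right triangles. *)

theory Defs
  imports "HOL-Analysis.Analysis"
begin

type_synonym point = "real \<times> real"

definition perp_line :: "point \<Rightarrow> point \<Rightarrow> point set" where
  "perp_line P Q = {X. inner (X - P) (Q - P) = 0}"

definition tri_area :: "point \<Rightarrow> point \<Rightarrow> point \<Rightarrow> real" where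
  "tri_area A B C = \<bar>(fst B - fst A) * (snd C - snd A) - (snd B - snd A) * (fst C - fst A)\<bar> / 2"

definition right_at :: "point \<Rightarrow> point \<Rightarrow> point \<Rightarrow> bool" where
  "right_at A B C \<longleftrightarrow> inner (B - A) (C - A) = 0"

definition right_triangle :: "point \<Rightarrow> point \<Rightarrow> point \<Rightarrow> bool" where
  "right_triangle A B C \<longleftrightarrow> \<not> collinear {A, B, C} \<and>
     (right_at A B C \<or> right_at B C A \<or> right_at C A B)"

definition isosceles_right_triangle :: "point \<Rightarrow> point \<Rightarrow> point \<Rightarrow> bool" where
  "isosceles_right_triangle A B C \<longleftrightarrow> \<not> collinear {A, B, C} \<and>
     ((right_at A B C \<and> dist A B = dist A C) \<or>
      (right_at B C A \<and> dist B C = dist B A) \<or>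
      (right_at C A B \<and> dist C A = dist C B))"

text \<open>A' B' C' is the triangle bounded by l1 = perpendicular to AB at B,
  l2 = perpendicular to BC at C, l3 = perpendicular to CA at A:
  C' = l1 \<inter> l2, A' = l2 \<inter> l3, B' = l3 \<inter> l1.\<close>
definition outer_triangle :: "point \<Rightarrow> point \<Rightarrow> point \<Rightarrow> point \<Rightarrow> point \<Rightarrow> point \<Rightarrow> bool" where
  "outer_triangle A B C A' B' C' \<longleftrightarrow>
     C' \<in> perp_line B A \<inter> perp_line C B \<and>
     A' \<in> perp_line C B \<inter> perp_line A C \<and>
     B' \<in> perp_line A C \<inter> perp_line B A"

end

theory Submission
  imports Defs
begin

text \<open>Put the right angle at \<open>B\<close> and write \<open>A = B + u\<close>, \<open>C = B + v\<close> with \<open>u \<bottom> v\<close>.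
  Since \<open>BC\<close> is itself perpendicular to \<open>AB\<close> at \<open>B\<close>, the vertex \<open>C'\<close> is just \<open>C\<close>;
  solving for \<open>A'\<close> and \<open>B'\<close> in the orthogonal frame \<open>u, v\<close> gives
  \<open>E'/E = (|u|\<^sup>2 + |v|\<^sup>2)\<^sup>2 / (|u|\<^sup>2 |v|\<^sup>2)\<close>, which is at least 4 by AM-GM, with equality
  exactly for equal legs. The other two positions of the right angle reduce to this one by
  cyclically relabelling both triangles.\<close>

definition cross :: "point \<Rightarrow> point \<Rightarrow> real" where
  "cross u v = fst u * snd v - snd u * fst v"

lemma tri_area_cross: "tri_area A B C = \<bar>cross (B - A) (C - A)\<bar> / 2"
  by (simp add: tri_area_def cross_def)

lemma tri_area_add_vertex: "tri_area (B + u) B (B + v) = \<bar>cross u v\<bar> / 2"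
  by (simp add: tri_area_def cross_def algebra_simps)

lemma cross_scaleR_left [simp]: "cross (c *\<^sub>R u) v = c * cross u v"
  and cross_scaleR_right [simp]: "cross u (c *\<^sub>R v) = c * cross u v"
  and cross_add_left [simp]: "cross (u + w) v = cross u v + cross w v"
  and cross_add_right [simp]: "cross u (v + w) = cross u v + cross u w"
  and cross_diff_left [simp]: "cross (u - w) v = cross u v - cross w v"
  and cross_diff_right [simp]: "cross u (v - w) = cross u v - cross u w"
  and cross_minus_left [simp]: "cross (- u) v = - cross u v"
  and cross_minus_right [simp]: "cross u (- v) = - cross u v"
  and cross_self [simp]: "cross u u = 0"
  by (simp_all add: cross_def algebra_simps)

lemma cross_skew: "cross v u = - cross u v"
  by (simp add: cross_def)

lemma cross_square_add_inner_square: "(cross u v)\<^sup>2 + (inner u v)\<^sup>2 = inner u u * inner v v"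
  by (cases u, cases v) (simp add: cross_def power2_eq_square algebra_simps)

lemma collinear_imp_cross_eq_0:
  assumes "collinear {A, B, C}" shows "cross (B - A) (C - A) = 0"
proof -
  obtain w where "\<forall>x\<in>{A, B, C}. \<forall>y\<in>{A, B, C}. \<exists>c. x - y = c *\<^sub>R w"
    using assms unfolding collinear_def by blast
  then obtain b c where "B - A = b *\<^sub>R w" "C - A = c *\<^sub>R w" by blast
  then show ?thesis by simp
qed

lemma cross_neq_0_if_orthogonal:
  assumes "inner u v = 0" "u \<noteq> 0" "v \<noteq> 0" shows "cross u v \<noteq> 0"
  using cross_square_add_inner_square[of u v] assms by auto

lemma eq_if_inner_eq_on_orthogonal_pair:
  fixes x y :: point
  assumes uv: "inner u v = 0" "u \<noteq> 0" "v \<noteq> 0"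
    and "inner x u = inner y u" "inner x v = inner y v"
  shows "x = y"
proof -
  define z where "z = x - y"
  have zu: "inner z u = 0" and zv: "inner z v = 0"
    using assms(4,5) by (simp_all add: z_def inner_diff_left)
  have "fst z * cross u v = snd v * inner z u - snd u * inner z v"
       "snd z * cross u v = fst u * inner z v - fst v * inner z u"
    by (cases u, cases v, cases z, simp add: cross_def algebra_simps)+
  then have "fst z = 0" "snd z = 0"
    using zu zv cross_neq_0_if_orthogonal[OF uv] by simp_all
  then show ?thesis by (simp add: z_def prod_eq_iff)
qed

lemma outer_triangle_right_at_B:
  assumes uv: "inner u v = 0" "u \<noteq> 0" "v \<noteq> 0"
    and outer: "outer_triangle (B + u) B (B + v) A' B' C'"
  shows "C' = B + v"
    and "A' = B + (((norm u)\<^sup>2 + (norm v)\<^sup>2) / (norm u)\<^sup>2) *\<^sub>R u + v"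
    and "B' = B - ((norm u)\<^sup>2 / (norm v)\<^sup>2) *\<^sub>R v"
proof -
  have vu: "inner v u = 0" using uv by (simp add: inner_commute)
  have nonzero: "inner u u \<noteq> 0" "inner v v \<noteq> 0" using uv by simp_all
  have perp:
      "inner (C' - B) u = 0" "inner (C' - B - v) v = 0"
      "inner (A' - B - v) v = 0" "inner (A' - B - u) (v - u) = 0"
      "inner (B' - B - u) (v - u) = 0" "inner (B' - B) u = 0"
    using outer unfolding outer_triangle_def perp_line_def
    by (auto simp: inner_minus_right algebra_simps)
  then have C': "inner (C' - B) u = 0" "inner (C' - B) v = inner v v"
    and A': "inner (A' - B) u = inner u u + inner v v" "inner (A' - B) v = inner v v"
    and B': "inner (B' - B) u = 0" "inner (B' - B) v = - inner u u"
    using uv vu by (simp_all add: inner_diff_left inner_diff_right algebra_simps)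
  have "C' - B = v"
    using C' vu by (intro eq_if_inner_eq_on_orthogonal_pair[OF uv]) simp_all
  then show "C' = B + v"
    by (simp add: algebra_simps)
  have "A' - B = (((norm u)\<^sup>2 + (norm v)\<^sup>2) / (norm u)\<^sup>2) *\<^sub>R u + v"
    using A' uv vu nonzero
    by (intro eq_if_inner_eq_on_orthogonal_pair[OF uv])
       (simp_all add: inner_add_left power2_norm_eq_inner field_simps)
  then show "A' = B + (((norm u)\<^sup>2 + (norm v)\<^sup>2) / (norm u)\<^sup>2) *\<^sub>R u + v"
    by (simp add: algebra_simps)
  have "B' - B = - ((norm u)\<^sup>2 / (norm v)\<^sup>2) *\<^sub>R v"
    using B' uv vu nonzero
    by (intro eq_if_inner_eq_on_orthogonal_pair[OF uv])
       (simp_all add: power2_norm_eq_inner field_simps)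
  then show "B' = B - ((norm u)\<^sup>2 / (norm v)\<^sup>2) *\<^sub>R v"
    by (simp add: algebra_simps)
qed

lemma tri_area_outer_triangle_right_at_B:
  assumes uv: "inner u v = 0" "u \<noteq> 0" "v \<noteq> 0"
    and outer: "outer_triangle (B + u) B (B + v) A' B' C'"
  shows "tri_area A' B' C'
    = ((norm u)\<^sup>2 + (norm v)\<^sup>2)\<^sup>2 / ((norm u)\<^sup>2 * (norm v)\<^sup>2) * tri_area (B + u) B (B + v)"
proof -
  define p q where "p = (norm u)\<^sup>2" and "q = (norm v)\<^sup>2"
  have "p > 0" "q > 0" using uv by (simp_all add: p_def q_def)
  note vertices = outer_triangle_right_at_B[OF uv outer, folded p_def q_def]
  have BA: "B' - A' = - ((p + q) / p) *\<^sub>R u - (1 + p / q) *\<^sub>R v"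
    and CA: "C' - A' = - ((p + q) / p) *\<^sub>R u"
    using vertices by (simp_all add: algebra_simps)
  have "cross (B' - A') (C' - A') = (p + q) / p * (1 + p / q) * cross v u"
    unfolding BA CA by simp
  also have "(p + q) / p * (1 + p / q) = (p + q)\<^sup>2 / (p * q)"
    using \<open>p > 0\<close> \<open>q > 0\<close> by (simp add: field_simps power2_eq_square)
  finally have "cross (B' - A') (C' - A') = (p + q)\<^sup>2 / (p * q) * cross v u" .
  then show ?thesis
    using \<open>p > 0\<close> \<open>q > 0\<close>
    by (simp add: tri_area_cross tri_area_add_vertex abs_mult p_def q_def cross_skew[of v u])
qed

lemma sum_square_div_prod_ge_4:
  fixes p q :: real
  assumes "p > 0" "q > 0"
  shows "4 \<le> (p + q)\<^sup>2 / (p * q)" and "(p + q)\<^sup>2 / (p * q) = 4 \<longleftrightarrow> p = q"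
proof -
  have gap: "(p + q)\<^sup>2 - 4 * (p * q) = (p - q)\<^sup>2"
    by (simp add: power2_eq_square algebra_simps)
  have "p * q > 0" using assms by simp
  have "4 * (p * q) \<le> (p + q)\<^sup>2"
    using gap by (metis diff_ge_0_iff_ge zero_le_power2)
  then show "4 \<le> (p + q)\<^sup>2 / (p * q)"
    using \<open>p * q > 0\<close> by (simp add: pos_le_divide_eq)
  have "(p + q)\<^sup>2 / (p * q) = 4 \<longleftrightarrow> (p + q)\<^sup>2 - 4 * (p * q) = 0"
    using \<open>p * q > 0\<close> by (auto simp: divide_eq_eq)
  then show "(p + q)\<^sup>2 / (p * q) = 4 \<longleftrightarrow> p = q"
    unfolding gap by simp
qed

lemma right_at_unique:
  assumes "right_at B C A" "A \<noteq> B" "C \<noteq> B"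
  shows "\<not> right_at A B C" and "\<not> right_at C A B"
proof -
  have "inner (B - A) (C - A) = inner (A - B) (A - B)"
       "inner (A - C) (B - C) = inner (C - B) (C - B)"
    using assms(1) unfolding right_at_def
    by (simp_all add: inner_diff_left inner_diff_right inner_commute algebra_simps)
  then show "\<not> right_at A B C" "\<not> right_at C A B"
    using assms(2,3) by (simp_all add: right_at_def)
qed

lemma outer_triangle_area_ratio_right_at_B:
  assumes noncollinear: "\<not> collinear {A, B, C}" and right: "right_at B C A"
    and outer: "outer_triangle A B C A' B' C'"
  shows "4 \<le> tri_area A' B' C' / tri_area A B C \<and>
    (tri_area A' B' C' / tri_area A B C = 4 \<longleftrightarrow> isosceles_right_triangle A B C)"
proof -
  define u v where "u = A - B" and "v = C - B"
  define p q where "p = (norm u)\<^sup>2" and "q = (norm v)\<^sup>2"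
  have "A \<noteq> B" "C \<noteq> B" using noncollinear by auto
  then have uv: "inner u v = 0" "u \<noteq> 0" "v \<noteq> 0"
    using right by (simp_all add: u_def v_def right_at_def inner_commute)
  have vertices: "A = B + u" "C = B + v" by (simp_all add: u_def v_def)
  then have area: "tri_area A' B' C' = (p + q)\<^sup>2 / (p * q) * tri_area A B C"
    using tri_area_outer_triangle_right_at_B[OF uv] outer by (simp add: p_def q_def)
  have "tri_area A B C \<noteq> 0"
    using cross_neq_0_if_orthogonal[OF uv] by (simp add: vertices tri_area_add_vertex)
  then have ratio: "tri_area A' B' C' / tri_area A B C = (p + q)\<^sup>2 / (p * q)"
    by (simp add: area)
  have "isosceles_right_triangle A B C \<longleftrightarrow> dist B C = dist B A"
    using noncollinear right right_at_unique[OF right \<open>A \<noteq> B\<close> \<open>C \<noteq> B\<close>]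
    by (auto simp: isosceles_right_triangle_def)
  also have "\<dots> \<longleftrightarrow> p = q"
    by (auto simp: p_def q_def u_def v_def dist_norm norm_minus_commute)
  finally show ?thesis
    using sum_square_div_prod_ge_4[of p q] uv by (auto simp: ratio p_def q_def)
qed

lemma tri_area_rotate: "tri_area B C A = tri_area A B C"
  by (simp add: tri_area_def algebra_simps)

lemma outer_triangle_rotate: "outer_triangle B C A B' C' A' = outer_triangle A B C A' B' C'"
  by (auto simp: outer_triangle_def)

lemma isosceles_right_triangle_rotate:
  "isosceles_right_triangle B C A = isosceles_right_triangle A B C"
  by (auto simp: isosceles_right_triangle_def insert_commute dist_commute)

lemma outer_triangle_area_ratio:
  assumes right: "right_triangle A B C" and outer: "outer_triangle A B C A' B' C'"
  shows "4 \<le> tri_area A' B' C' / tri_area A B C \<and>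
    (tri_area A' B' C' / tri_area A B C = 4 \<longleftrightarrow> isosceles_right_triangle A B C)"
proof -
  have noncollinear: "\<not> collinear {A, B, C}" "\<not> collinear {B, C, A}" "\<not> collinear {C, A, B}"
    using right by (simp_all add: right_triangle_def insert_commute)
  from right consider "right_at B C A" | "right_at C A B" | "right_at A B C"
    unfolding right_triangle_def by blast
  then show ?thesis
  proof cases
    case 1
    then show ?thesis using outer_triangle_area_ratio_right_at_B noncollinear outer by blast
  next
    case 2
    then show ?thesis
      using outer_triangle_area_ratio_right_at_B[of B C A B' C' A'] noncollinear outer
      by (simp add: tri_area_rotate[of B C A] tri_area_rotate[of B' C' A']
          outer_triangle_rotate[of B C A] isosceles_right_triangle_rotate[of B C A])
  next
    case 3
    then show ?thesis
      using outer_triangle_area_ratio_right_at_B[of C A B C' A' B'] noncollinear outer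
      by (simp add: tri_area_rotate[of C A B] tri_area_rotate[of C' A' B']
          tri_area_rotate[of B C A] tri_area_rotate[of B' C' A']
          outer_triangle_rotate[of C A B] outer_triangle_rotate[of B C A]
          isosceles_right_triangle_rotate[of C A B] isosceles_right_triangle_rotate[of B C A])
  qed
qed

theorem mainTheorem3:
  shows "(\<forall>A B C A' B' C'. right_triangle A B C \<and> outer_triangle A B C A' B' C' \<longrightarrow>
            tri_area A' B' C' / tri_area A B C \<ge> 4 \<and>
            (tri_area A' B' C' / tri_area A B C = 4 \<longleftrightarrow> isosceles_right_triangle A B C))
         \<and> (\<exists>A B C A' B' C'. right_triangle A B C \<and> outer_triangle A B C A' B' C' \<and>
            tri_area A' B' C' / tri_area A B C = 4)"
proof
  show "\<forall>A B C A' B' C'. right_triangle A B C \<and> outer_triangle A B C A' B' C' \<longrightarrow>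
          tri_area A' B' C' / tri_area A B C \<ge> 4 \<and>
          (tri_area A' B' C' / tri_area A B C = 4 \<longleftrightarrow> isosceles_right_triangle A B C)"
    using outer_triangle_area_ratio by blast
next
  have "\<not> collinear {(1, 0), (0, 0), (0, 1) :: point}"
    using collinear_imp_cross_eq_0 by (force simp: cross_def)
  then have "right_triangle (1, 0) (0, 0) (0, 1)"
    by (simp add: right_triangle_def right_at_def)
  moreover have "outer_triangle (1, 0) (0, 0) (0, 1) (2, 1) (0, -1) (0, 1)"
    by (simp add: outer_triangle_def perp_line_def)
  moreover have "tri_area (2, 1) (0, -1) (0, 1) / tri_area (1, 0) (0, 0) (0, 1) = 4"
    by (simp add: tri_area_def)
  ultimately show "\<exists>A B C A' B' C'. right_triangle A B C \<and> outer_triangle A B C A' B' C' \<and>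
      tri_area A' B' C' / tri_area A B C = 4"
    by blast
qed

end
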